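(* Let $0<p<1$. Then $$w_n^{\lfloor np-\epsilon(n)\rfloor}(p)\geq\frac{1}{p}-n^{-\Theta(\log n)}\qquad\text{and}\qquad w_n^{\lfloor np+\epsilon(n)\rfloor}(p)\leq n^{-\Theta(\log n)},$$ i.e. there exist functions $f,g:\mathbb{N}\to\mathbb{R}^+_0$ with $f(n)=\Theta(\log n)$ and $g(n)=\Theta(\log n)$ such that $w_n^{\lfloor np-\epsilon(n)\rfloor}(p)\geq\frac1p-n^{-f(n)}$ and $w_n^{\lfloor np+\epsilon(n)\rfloor}(p)\leq n^{-g(n)}$ for all sufficiently large $n$.
   Context: For $0<p<1$, $n\in\mathbb{N}$ and $0\le i\le n$, $w_n^i(p)=\sum_{j=i}^n\binom{j}{i}p^i(1-p)^{j-i}$. Define $\epsilon:\mathbb{N}\to\mathbb{R}^+$ by $\epsilon(n)=\sqrt{n}\log n$ for $n\geq2$ and $\epsilon(n)=1$ otherwise. For $f,g:\mathbb{N}\to\mathbb{R}^+_0$, $f(n)=\Theta(g(n))$ means there are $C_1,C_2>0$ with $C_1g(n)\le f(n)\le C_2 g(n)$ for all sufficiently large $n$. *)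

theory Defs
  imports Complex_Main
begin

definition w :: "nat \<Rightarrow> nat \<Rightarrow> real \<Rightarrow> real" where
  "w n i p = (\<Sum>j=i..n. real (j choose i) * p ^ i * (1 - p) ^ (j - i))"

definition eps :: "nat \<Rightarrow> real" where
  "eps n = (if n \<ge> 2 then sqrt (real n) * ln (real n) else 1)"

definition bigTheta_nat :: "(nat \<Rightarrow> real) \<Rightarrow> (nat \<Rightarrow> real) \<Rightarrow> bool" where
  "bigTheta_nat f g \<longleftrightarrow> (\<exists>C1 C2. C1 > 0 \<and> C2 > 0 \<and>
     (\<forall>\<^sub>F n in sequentially. C1 * g n \<le> f n \<and> f n \<le> C2 * g n))"

end

theory Submission
  imports Defs "HOL-Probability.Hoeffding" "HOL-Real_Asymp.Real_Asymp"
begin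

text \<open>
  Up to the factor \<open>p\<close>, \<open>w n i p\<close> is the probability that a negative binomial variable
  (failures before the \<open>(i+1)\<close>-st success) is at most \<open>n - i\<close>, i.e. a binomial tail
  probability for \<open>n + 1\<close> trials.  Hoeffding's inequality then bounds the deviation
  \<open>\<epsilon>(n) = \<surd>n log n\<close> from the mean \<open>n p\<close> by \<open>exp (-2 \<epsilon>(n)\<^sup>2 / (n + 1)) \<approx> n\<^bsup>-2 log n\<^esup>\<close>,
  which absorbs the factor \<open>1 / p\<close> and still beats \<open>n\<^bsup>-log n / 4\<^esup>\<close>.
\<close>

lemma w_eq_binomial_tail:
  assumes p: "0 < p" "p < 1" and i: "i \<le> n"
  shows "p * w n i p = measure_pmf.prob (binomial_pmf (n + 1) (1 - p)) {..n - i}"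
proof -
  have w_eq: "w n i p = (\<Sum>m\<le>n - i. real (m + i choose i) * p ^ i * (1 - p) ^ m)"
    unfolding w_def using i
    by (intro sum.reindex_bij_witness[of _ "\<lambda>j. j + i" "\<lambda>j. j - i"]) auto
  have "p * w n i p = (\<Sum>m\<le>n - i. pmf (neg_binomial_pmf (i + 1) p) m)"
    unfolding w_eq sum_distrib_left using p
    by (intro sum.cong refl) (simp add: pmf_neg_binomial binomial_symmetric[of i] algebra_simps)
  also have "\<dots> = measure_pmf.prob (neg_binomial_pmf (i + 1) p) {..n - i}"
    by (intro measure_measure_pmf_finite [symmetric]) auto
  also have "\<dots> = measure_pmf.prob (binomial_pmf (n + 1) (1 - p)) {..n - i}"
    using prob_neg_binomial_pmf_atMost[of p "i + 1" "n - i"] p i by simp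
  finally show ?thesis .
qed

lemma w_le_hoeffding:
  assumes p: "0 < p" "p < 1" and t: "t \<ge> 0" and i: "real (n + 1) * p + t \<le> real i + 1"
  shows "w n i p \<le> exp (-2 * t\<^sup>2 / real (n + 1)) / p"
proof (cases "i \<le> n")
  case False
  hence "w n i p = 0" by (simp add: w_def)
  thus ?thesis using p by simp
next
  case True
  have "{..n - i} \<subseteq> {x. real x \<le> real (n + 1) * (1 - p) - t}"
    using True i by (auto simp: algebra_simps)
  hence "p * w n i p \<le> measure_pmf.prob (binomial_pmf (n + 1) (1 - p))
                           {x. real x \<le> real (n + 1) * (1 - p) - t}"
    unfolding w_eq_binomial_tail[OF p True] by (intro measure_pmf.finite_measure_mono) auto
  also have "\<dots> \<le> exp (-2 * t\<^sup>2 / real (n + 1))"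
    by (rule binomial_distribution.prob_le) (use p t in \<open>auto simp: binomial_distribution_def\<close>)
  finally show ?thesis using p by (simp add: field_simps)
qed

lemma inverse_minus_w_le_hoeffding:
  assumes p: "0 < p" "p < 1" and t: "t \<ge> 0" and i: "real i + t \<le> real (n + 1) * p"
  shows "1 / p - w n i p \<le> exp (-2 * t\<^sup>2 / real (n + 1)) / p"
proof -
  let ?B = "binomial_pmf (n + 1) (1 - p)"
  have "real (n + 1) * p < real (n + 1)" using p by simp
  hence "i \<le> n" using i t by linarith
  have "UNIV - {..n - i} \<subseteq> {x. real x \<ge> real (n + 1) * (1 - p) + t}"
    using \<open>i \<le> n\<close> i by (auto simp: algebra_simps)
  hence "measure_pmf.prob ?B (UNIV - {..n - i}) \<le>
           measure_pmf.prob ?B {x. real x \<ge> real (n + 1) * (1 - p) + t}"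
    by (intro measure_pmf.finite_measure_mono) auto
  hence "1 - p * w n i p \<le> measure_pmf.prob ?B {x. real x \<ge> real (n + 1) * (1 - p) + t}"
    using measure_pmf.prob_compl[of "{..n - i}" ?B] w_eq_binomial_tail[OF p \<open>i \<le> n\<close>] by simp
  also have "\<dots> \<le> exp (-2 * t\<^sup>2 / real (n + 1))"
    by (rule binomial_distribution.prob_ge) (use p t in \<open>auto simp: binomial_distribution_def\<close>)
  finally have "(1 - p * w n i p) / p \<le> exp (-2 * t\<^sup>2 / real (n + 1)) / p"
    using p by (simp add: divide_right_mono)
  thus ?thesis using p by (simp add: diff_divide_distrib)
qed

lemma eventually_eps_eq: "\<forall>\<^sub>F n in sequentially. eps n = sqrt (real n) * ln (real n)"
  using eventually_ge_at_top[of "2::nat"] by eventually_elim (simp add: eps_def)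

lemma ln_sq_le_hoeffding_exponent:
  assumes n: "n \<ge> 1" and e: "sqrt (real n) * ln (real n) \<ge> 4"
  shows "(ln (real n))\<^sup>2 / 2 \<le> 2 * (sqrt (real n) * ln (real n) - 1)\<^sup>2 / real (n + 1)"
proof -
  define L where "L = ln (real n)"
  define e where "e = sqrt (real n) * L"
  have "(3 * e / 4)\<^sup>2 \<le> (e - 1)\<^sup>2"
    using e by (intro power_mono) (auto simp: e_def L_def)
  hence "9 * e\<^sup>2 \<le> 16 * (e - 1)\<^sup>2"
    by (simp add: power_divide power_mult_distrib)
  moreover have "e\<^sup>2 = real n * L\<^sup>2"
    using n by (simp add: e_def power_mult_distrib)
  moreover have "L\<^sup>2 \<le> real n * L\<^sup>2"
    using mult_right_mono[of 1 "real n" "L\<^sup>2"] n by simp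
  moreover have "real (n + 1) * L\<^sup>2 = real n * L\<^sup>2 + L\<^sup>2"
    by (simp add: algebra_simps)
  ultimately have "real (n + 1) * L\<^sup>2 \<le> 4 * (e - 1)\<^sup>2"
    using zero_le_power2[of L] by linarith
  thus ?thesis by (simp add: field_simps e_def L_def)
qed

lemma eventually_hoeffding_eps_le_powr:
  fixes p :: real
  assumes "p > 0"
  shows "\<forall>\<^sub>F n in sequentially.
           exp (-2 * (eps n - 1)\<^sup>2 / real (n + 1)) / p \<le> real n powr (- (ln (real n) / 4))"
proof -
  have "\<forall>\<^sub>F n in sequentially. exp (- (ln (real n))\<^sup>2 / 2) / p \<le> exp (- (ln (real n))\<^sup>2 / 4)"
       "\<forall>\<^sub>F n in sequentially. sqrt (real n) * ln (real n) \<ge> 4"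
    using assms by real_asymp+
  with eventually_eps_eq eventually_ge_at_top[of "1::nat"]
  show ?thesis
  proof eventually_elim
    case (elim n)
    have "exp (-2 * (eps n - 1)\<^sup>2 / real (n + 1)) / p \<le> exp (- (ln (real n))\<^sup>2 / 2) / p"
      using ln_sq_le_hoeffding_exponent[of n] elim assms by (simp add: divide_right_mono)
    also have "\<dots> \<le> exp (- (ln (real n))\<^sup>2 / 4)" using elim by simp
    also have "\<dots> = real n powr (- (ln (real n) / 4))"
      using elim by (simp add: powr_def power2_eq_square)
    finally show ?case .
  qed
qed

theorem corollary2:
  fixes p :: real
  assumes "0 < p" and "p < 1"
  shows "\<exists>f g :: nat \<Rightarrow> real. (\<forall>n. f n \<ge> 0) \<and> (\<forall>n. g n \<ge> 0) \<and>
    bigTheta_nat f (\<lambda>n. ln (real n)) \<and> bigTheta_nat g (\<lambda>n. ln (real n)) \<and>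
    (\<forall>\<^sub>F n in sequentially.
        w n (nat \<lfloor>real n * p - eps n\<rfloor>) p \<ge> 1 / p - real n powr (- f n) \<and>
        w n (nat \<lfloor>real n * p + eps n\<rfloor>) p \<le> real n powr (- g n))"
proof -
  define f :: "nat \<Rightarrow> real" where "f n = ln (real n) / 4" for n
  have "f n \<ge> 0" for n by (cases n) (auto simp: f_def)
  moreover have "bigTheta_nat f (\<lambda>n. ln (real n))"
    unfolding bigTheta_nat_def f_def by (intro exI[of _ "1/4"]) auto
  moreover have "\<forall>\<^sub>F n in sequentially. sqrt (real n) * ln (real n) \<le> real n * p"
                "\<forall>\<^sub>F n in sequentially. sqrt (real n) * ln (real n) \<ge> 1"
    using assms by real_asymp+
  with eventually_eps_eq eventually_hoeffding_eps_le_powr[OF assms(1)]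
  have "\<forall>\<^sub>F n in sequentially.
          w n (nat \<lfloor>real n * p - eps n\<rfloor>) p \<ge> 1 / p - real n powr (- f n) \<and>
          w n (nat \<lfloor>real n * p + eps n\<rfloor>) p \<le> real n powr (- f n)"
  proof eventually_elim
    case (elim n)
    let ?lo = "nat \<lfloor>real n * p - eps n\<rfloor>" and ?hi = "nat \<lfloor>real n * p + eps n\<rfloor>"
    have t: "eps n - 1 \<ge> 0" using elim by simp
    have "0 \<le> \<lfloor>real n * p - eps n\<rfloor>" "0 \<le> \<lfloor>real n * p + eps n\<rfloor>"
      using elim assms by simp_all
    \<comment> \<open>the floors cost at most 1, hence Hoeffding with deviation \<open>eps n - 1\<close>\<close>
    hence "real ?lo + (eps n - 1) \<le> real (n + 1) * p"
          "real (n + 1) * p + (eps n - 1) \<le> real ?hi + 1"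
      using elim assms by (simp_all add: algebra_simps) linarith+
    hence "1 / p - w n ?lo p \<le> exp (-2 * (eps n - 1)\<^sup>2 / real (n + 1)) / p"
          "w n ?hi p \<le> exp (-2 * (eps n - 1)\<^sup>2 / real (n + 1)) / p"
      using inverse_minus_w_le_hoeffding w_le_hoeffding assms t by blast+
    thus ?case using elim unfolding f_def by linarith
  qed
  ultimately show ?thesis by blast
qed

end
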